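(* Let $\mathbb{K}$ be an algebraically closed field of characteristic $0$ and $\alpha,\alpha'\in\mathbb{K}$. The down-up algebras $A(\alpha,0,0)$ and $A(\alpha',0,0)$ are isomorphic as $\mathbb{K}$-algebras if and only if $\alpha=\alpha'$.
   Context: For $(\alpha,\beta,\gamma)\in\mathbb{K}^3$, the down-up algebra $A(\alpha,\beta,\gamma)$ is the quotient of the free associative algebra $\mathbb{K}\langle d,u\rangle$ by the two-sided ideal generated by $d^2u-(\alpha dud+\beta ud^2+\gamma d)$ and $du^2-(\alpha udu+\beta u^2d+\gamma u)$. *)

theory Defs
  imports "HOL-Algebra.QuotRing" "HOL-Algebra.Ideal" "HOL-Computational_Algebra.Polynomial"
begin

definition alg_closed :: "'k::field itself \<Rightarrow> bool" where
  "alg_closed _ \<longleftrightarrow> (\<forall>p::'k poly. degree p > 0 \<longrightarrow> (\<exists>x. poly p x = 0))"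

datatype gen = D | U

text \<open>The free associative algebra K<d,u>: finitely supported coefficient
functions on words, with concatenation (convolution) product.\<close>
definition fa_mult :: "(gen list \<Rightarrow> 'k::field) \<Rightarrow> (gen list \<Rightarrow> 'k) \<Rightarrow> gen list \<Rightarrow> 'k" where
  "fa_mult f g = (\<lambda>w. \<Sum>i\<le>length w. f (take i w) * g (drop i w))"

definition fa_monom :: "gen list \<Rightarrow> 'k::field \<Rightarrow> gen list \<Rightarrow> 'k" where
  "fa_monom w c = (\<lambda>v. if v = w then c else 0)"

definition free_alg :: "(gen list \<Rightarrow> 'k::field) ring" where
  "free_alg = \<lparr> carrier = {f. finite {w. f w \<noteq> 0}},
               monoid.mult = fa_mult,
               one = fa_monom [] 1,
               zero = (\<lambda>w. 0),
               add = (\<lambda>f g w. f w + g w) \<rparr>"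

definition du_rel1 :: "'k::field \<Rightarrow> 'k \<Rightarrow> 'k \<Rightarrow> gen list \<Rightarrow> 'k" where
  "du_rel1 \<alpha> \<beta> \<gamma> = (\<lambda>w. fa_monom [D,D,U] 1 w
      - (fa_monom [D,U,D] \<alpha> w + fa_monom [U,D,D] \<beta> w + fa_monom [D] \<gamma> w))"

definition du_rel2 :: "'k::field \<Rightarrow> 'k \<Rightarrow> 'k \<Rightarrow> gen list \<Rightarrow> 'k" where
  "du_rel2 \<alpha> \<beta> \<gamma> = (\<lambda>w. fa_monom [D,U,U] 1 w
      - (fa_monom [U,D,U] \<alpha> w + fa_monom [U,U,D] \<beta> w + fa_monom [U] \<gamma> w))"

definition du_ideal :: "'k::field \<Rightarrow> 'k \<Rightarrow> 'k \<Rightarrow> (gen list \<Rightarrow> 'k) set" where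
  "du_ideal \<alpha> \<beta> \<gamma> = genideal free_alg {du_rel1 \<alpha> \<beta> \<gamma>, du_rel2 \<alpha> \<beta> \<gamma>}"

definition down_up :: "'k::field \<Rightarrow> 'k \<Rightarrow> 'k \<Rightarrow> (gen list \<Rightarrow> 'k) set ring" where
  "down_up \<alpha> \<beta> \<gamma> = free_alg Quot (du_ideal \<alpha> \<beta> \<gamma>)"

definition du_scalar :: "'k::field \<Rightarrow> 'k \<Rightarrow> 'k \<Rightarrow> 'k \<Rightarrow> (gen list \<Rightarrow> 'k) set" where
  "du_scalar \<alpha> \<beta> \<gamma> c = du_ideal \<alpha> \<beta> \<gamma> +>\<^bsub>free_alg\<^esub> fa_monom [] c"

text \<open>Isomorphism of K-algebras: ring isomorphism compatible with the structure maps
  (equivalently, a K-linear ring isomorphism).\<close>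
definition down_up_iso :: "'k::field \<Rightarrow> 'k \<Rightarrow> 'k \<Rightarrow> 'k \<Rightarrow> 'k \<Rightarrow> 'k \<Rightarrow> bool" where
  "down_up_iso \<alpha> \<beta> \<gamma> \<alpha>' \<beta>' \<gamma>' \<longleftrightarrow>
     (\<exists>\<phi>. \<phi> \<in> ring_iso (down_up \<alpha> \<beta> \<gamma>) (down_up \<alpha>' \<beta>' \<gamma>') \<and>
          (\<forall>c. \<phi> (du_scalar \<alpha> \<beta> \<gamma> c) = du_scalar \<alpha>' \<beta>' \<gamma>' c))"

end

theory Submission
  imports Defs
begin

text \<open>
  An isomorphism \<open>A(\<alpha>,0,0) \<cong> A(\<alpha>',0,0)\<close> of \<open>\<bbbK>\<close>-algebras is described by noncommutative
  polynomials \<open>P, Q\<close> (images of \<open>d, u\<close>) and \<open>R, S\<close> (images under the inverse). Substituting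
  \<open>P, Q\<close> turns every representation of \<open>A(\<alpha>',0,0)\<close> into one of \<open>A(\<alpha>,0,0)\<close>, and
  substituting \<open>R, S\<close> recovers the original one. We only use representations by upper
  triangular \<open>2\<times>2\<close> matrices. Under substitution their corner entries transform by a linear
  map that \<open>R, S\<close> invert, so the property "every choice of corners gives a representation"
  is transported along with the diagonals. For \<open>\<alpha> = 1\<close> all scalar pairs have this property,
  while for \<open>\<alpha>' \<noteq> 1\<close> the pair \<open>(1, E\<^sub>1\<^sub>2)\<close> is not a representation; so \<open>\<alpha> = 1\<close> forces \<open>\<alpha>' = 1\<close>.
  If \<open>\<alpha>, \<alpha>' \<noteq> 1\<close> and \<open>\<alpha> \<noteq> 0\<close>, the one-dimensional representations \<open>(a, 0)\<close> give a polynomial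
  \<open>f(a) = P(a, 0)\<close> with polynomial left inverse \<open>a \<mapsto> R(a, 0)\<close> and \<open>f(\<alpha> a) = \<alpha>' f(a)\<close>;
  hence \<open>f\<close> is linear and \<open>\<alpha> = \<alpha>'\<close>.
\<close>

section \<open>The free algebra and the down-up algebra\<close>

lemma fa_mult_assoc: "fa_mult (fa_mult f g) h = fa_mult f (fa_mult g h)"
proof
  fix w :: "gen list"
  define n where "n = length w"
  define T where "T j i = f (take j w) * g (take (i - j) (drop j w)) * h (drop i w)" for j i
  have "fa_mult (fa_mult f g) h w = (\<Sum>i\<le>n. \<Sum>j\<in>{j\<in>{..n}. j \<le> i}. T j i)"
    unfolding fa_mult_def n_def T_def
    by (rule sum.cong) (auto simp: sum_distrib_right min_def take_take drop_take intro!: sum.cong)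
  also have "\<dots> = (\<Sum>j\<le>n. \<Sum>i\<in>{i\<in>{..n}. j \<le> i}. T j i)"
    by (rule sum.swap_restrict[symmetric]) simp_all
  also have "\<dots> = (\<Sum>j\<le>n. \<Sum>k\<le>n - j. T j (j + k))"
  proof (rule sum.cong)
    fix j assume "j \<in> {..n}"
    have "{i\<in>{..n}. j \<le> i} = {j..n}" by auto
    then show "(\<Sum>i\<in>{i\<in>{..n}. j \<le> i}. T j i) = (\<Sum>k\<le>n - j. T j (j + k))"
      using \<open>j \<in> {..n}\<close> sum.shift_bounds_cl_nat_ivl[of "T j" 0 j "n - j"]
      by (simp add: atLeast0AtMost add.commute)
  qed simp
  also have "\<dots> = fa_mult f (fa_mult g h) w"
    unfolding fa_mult_def n_def T_def
    by (rule sum.cong) (auto simp: sum_distrib_left mult.assoc add.commute intro!: sum.cong)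
  finally show "fa_mult (fa_mult f g) h w = fa_mult f (fa_mult g h) w" .
qed

lemma free_alg_simps:
  "carrier free_alg = {f. finite {w. f w \<noteq> 0}}"
  "monoid.mult free_alg = fa_mult"
  "monoid.one free_alg = fa_monom [] 1"
  "ring.zero free_alg = (\<lambda>w. 0)"
  "ring.add free_alg = (\<lambda>f g w. f w + g w)"
  by (simp_all add: free_alg_def)

lemma fa_mult_support:
  "{w. fa_mult f g w \<noteq> 0} \<subseteq> (\<lambda>(a, b). a @ b) ` ({w. f w \<noteq> 0} \<times> {w. g w \<noteq> 0})"
proof
  fix w assume "w \<in> {w. fa_mult f g w \<noteq> 0}"
  then obtain i where "f (take i w) * g (drop i w) \<noteq> 0"
    unfolding fa_mult_def by (auto intro: sum.not_neutral_contains_not_neutral)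
  then show "w \<in> (\<lambda>(a, b). a @ b) ` ({w. f w \<noteq> 0} \<times> {w. g w \<noteq> 0})"
    by (auto intro!: image_eqI[where x="(take i w, drop i w)"])
qed

lemma finite_support_fa_mult:
  "finite {w. f w \<noteq> 0} \<Longrightarrow> finite {w. g w \<noteq> 0} \<Longrightarrow> finite {w. fa_mult f g w \<noteq> 0}"
  by (rule finite_subset[OF fa_mult_support]) auto

lemma finite_support_add:
  "finite {w. f w \<noteq> 0} \<Longrightarrow> finite {w. g w \<noteq> 0} \<Longrightarrow> finite {w. f w + g w \<noteq> (0::'a::monoid_add)}"
  by (rule finite_subset[of _ "{w. f w \<noteq> 0} \<union> {w. g w \<noteq> 0}"]) auto

lemma finite_support_fa_monom: "finite {v. fa_monom w c v \<noteq> 0}"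
  by (rule finite_subset[of _ "{w}"]) (auto simp: fa_monom_def)

lemma fa_monom_carrier: "fa_monom w c \<in> carrier free_alg"
  by (simp add: free_alg_simps finite_support_fa_monom)

lemma fa_mult_one_left: "fa_mult (fa_monom [] 1) f = f"
proof
  fix w :: "gen list"
  have "fa_mult (fa_monom [] 1) f w = (\<Sum>i\<le>length w. if i = 0 then f w else 0)"
    unfolding fa_mult_def fa_monom_def by (rule sum.cong) auto
  then show "fa_mult (fa_monom [] 1) f w = f w" by simp
qed

lemma fa_mult_one_right: "fa_mult f (fa_monom [] 1) = f"
proof
  fix w :: "gen list"
  have "fa_mult f (fa_monom [] 1) w = (\<Sum>i\<le>length w. if i = length w then f w else 0)"
    unfolding fa_mult_def fa_monom_def by (rule sum.cong) auto
  then show "fa_mult f (fa_monom [] 1) w = f w" by simp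
qed

lemma ring_free_alg: "ring (free_alg :: (gen list \<Rightarrow> 'k::field) ring)"
proof (rule ringI)
  show "abelian_group (free_alg :: (gen list \<Rightarrow> 'k) ring)"
  proof (rule abelian_groupI, simp_all add: free_alg_simps finite_support_add)
    show "\<exists>y. finite {w. y w \<noteq> 0} \<and> (\<lambda>w. y w + x w) = (\<lambda>w. 0::'k)"
      if "finite {w. x w \<noteq> 0}" for x :: "gen list \<Rightarrow> 'k"
      using that by (intro exI[of _ "\<lambda>w. - x w"]) auto
  qed (auto simp: add.assoc add.commute)
  show "monoid (free_alg :: (gen list \<Rightarrow> 'k) ring)"
    by (rule monoidI) (auto simp: free_alg_simps finite_support_fa_mult finite_support_fa_monom
        fa_mult_one_left fa_mult_one_right fa_mult_assoc)
qed (simp_all add: free_alg_simps fa_mult_def fun_eq_iff distrib_left distrib_right sum.distrib)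

lemma take_drop_eq_iff:
  assumes "i \<le> length v"
  shows "take i v = a \<and> drop i v = b \<longleftrightarrow> v = a @ b \<and> i = length a"
  using assms by (metis append_eq_conv_conj append_take_drop_id length_take min.absorb2)

lemma fa_monom_mult: "fa_mult (fa_monom a c) (fa_monom b d) = fa_monom (a @ b) (c * d)"
proof
  fix v :: "gen list"
  have "fa_mult (fa_monom a c) (fa_monom b d) v
      = (\<Sum>i\<le>length v. if v = a @ b \<and> i = length a then c * d else 0)"
    unfolding fa_mult_def fa_monom_def
    by (rule sum.cong) (auto simp: take_drop_eq_iff[symmetric])
  then show "fa_mult (fa_monom a c) (fa_monom b d) v = fa_monom (a @ b) (c * d) v"
    by (auto simp: fa_monom_def)
qed

lemma du_relations_carrier:
  "du_rel1 \<alpha> \<beta> \<gamma> \<in> carrier free_alg" "du_rel2 \<alpha> \<beta> \<gamma> \<in> carrier free_alg"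
proof -
  have "{w. du_rel1 \<alpha> \<beta> \<gamma> w \<noteq> 0} \<subseteq> {[D,D,U], [D,U,D], [U,D,D], [D]}"
       "{w. du_rel2 \<alpha> \<beta> \<gamma> w \<noteq> 0} \<subseteq> {[D,U,U], [U,D,U], [U,U,D], [U]}"
    by (auto simp: du_rel1_def du_rel2_def fa_monom_def)
  then show "du_rel1 \<alpha> \<beta> \<gamma> \<in> carrier free_alg" "du_rel2 \<alpha> \<beta> \<gamma> \<in> carrier free_alg"
    by (auto simp: free_alg_simps intro: finite_subset)
qed

lemma ideal_du_ideal: "ideal (du_ideal \<alpha> \<beta> \<gamma>) free_alg"
  unfolding du_ideal_def
  by (rule ring.genideal_ideal[OF ring_free_alg]) (simp add: du_relations_carrier)

lemma du_relations_in_ideal: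
  "du_rel1 \<alpha> \<beta> \<gamma> \<in> du_ideal \<alpha> \<beta> \<gamma>" "du_rel2 \<alpha> \<beta> \<gamma> \<in> du_ideal \<alpha> \<beta> \<gamma>"
  unfolding du_ideal_def
  using ring.genideal_self[OF ring_free_alg, of "{du_rel1 \<alpha> \<beta> \<gamma>, du_rel2 \<alpha> \<beta> \<gamma>}"]
  by (auto simp: du_relations_carrier)

lemma ring_down_up: "ring (down_up \<alpha> \<beta> \<gamma>)"
  unfolding down_up_def by (rule ideal.quotient_is_ring[OF ideal_du_ideal])

definition du_class :: "'k::field \<Rightarrow> 'k \<Rightarrow> 'k \<Rightarrow> (gen list \<Rightarrow> 'k) \<Rightarrow> (gen list \<Rightarrow> 'k) set" where
  "du_class \<alpha> \<beta> \<gamma> f = du_ideal \<alpha> \<beta> \<gamma> +>\<^bsub>free_alg\<^esub> f"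

abbreviation du_d :: "'k::field \<Rightarrow> 'k \<Rightarrow> 'k \<Rightarrow> (gen list \<Rightarrow> 'k) set" where
  "du_d \<alpha> \<beta> \<gamma> \<equiv> du_class \<alpha> \<beta> \<gamma> (fa_monom [D] 1)"

abbreviation du_u :: "'k::field \<Rightarrow> 'k \<Rightarrow> 'k \<Rightarrow> (gen list \<Rightarrow> 'k) set" where
  "du_u \<alpha> \<beta> \<gamma> \<equiv> du_class \<alpha> \<beta> \<gamma> (fa_monom [U] 1)"

lemma du_class_ring_hom: "du_class \<alpha> \<beta> \<gamma> \<in> ring_hom free_alg (down_up \<alpha> \<beta> \<gamma>)"
  unfolding du_class_def[abs_def] down_up_def by (rule ideal.rcos_ring_hom[OF ideal_du_ideal])

lemma du_class_add:
  "f \<in> carrier free_alg \<Longrightarrow> g \<in> carrier free_alg \<Longrightarrow>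
     du_class \<alpha> \<beta> \<gamma> (f \<oplus>\<^bsub>free_alg\<^esub> g) = du_class \<alpha> \<beta> \<gamma> f \<oplus>\<^bsub>down_up \<alpha> \<beta> \<gamma>\<^esub> du_class \<alpha> \<beta> \<gamma> g"
  by (rule ring_hom_add[OF du_class_ring_hom])

lemma du_class_mult:
  "f \<in> carrier free_alg \<Longrightarrow> g \<in> carrier free_alg \<Longrightarrow>
     du_class \<alpha> \<beta> \<gamma> (f \<otimes>\<^bsub>free_alg\<^esub> g) = du_class \<alpha> \<beta> \<gamma> f \<otimes>\<^bsub>down_up \<alpha> \<beta> \<gamma>\<^esub> du_class \<alpha> \<beta> \<gamma> g"
  by (rule ring_hom_mult[OF du_class_ring_hom])

lemma carrier_down_up: "carrier (down_up \<alpha> \<beta> \<gamma>) = du_class \<alpha> \<beta> \<gamma> ` carrier free_alg"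
  by (auto simp: down_up_def FactRing_def A_RCOSETS_def' du_class_def)

lemma du_class_carrier: "f \<in> carrier free_alg \<Longrightarrow> du_class \<alpha> \<beta> \<gamma> f \<in> carrier (down_up \<alpha> \<beta> \<gamma>)"
  by (simp add: carrier_down_up)

lemma du_class_eq_zero: "r \<in> du_ideal \<alpha> \<beta> \<gamma> \<Longrightarrow> du_class \<alpha> \<beta> \<gamma> r = \<zero>\<^bsub>down_up \<alpha> \<beta> \<gamma>\<^esub>"
  unfolding du_class_def down_up_def FactRing_def
  by (simp add: ring.a_rcos_zero[OF ring_free_alg ideal_du_ideal])

lemma du_class_zero: "du_class \<alpha> \<beta> \<gamma> \<zero>\<^bsub>free_alg\<^esub> = \<zero>\<^bsub>down_up \<alpha> \<beta> \<gamma>\<^esub>"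
  by (rule ring_hom_zero[OF du_class_ring_hom ring_free_alg ring_down_up])

lemma du_scalar_eq_class: "du_scalar \<alpha> \<beta> \<gamma> c = du_class \<alpha> \<beta> \<gamma> (fa_monom [] c)"
  by (simp add: du_scalar_def du_class_def)

section \<open>Evaluation in algebras with central scalars\<close>

definition word_eval :: "'a::monoid_mult \<Rightarrow> 'a \<Rightarrow> gen list \<Rightarrow> 'a" where
  "word_eval x y w = prod_list (map (\<lambda>g. case g of D \<Rightarrow> x | U \<Rightarrow> y) w)"

lemma word_eval_simps [simp]:
  "word_eval x y [] = 1"
  "word_eval x y (D # w) = x * word_eval x y w"
  "word_eval x y (U # w) = y * word_eval x y w"
  "word_eval x y (v @ w) = word_eval x y v * word_eval x y w"
  by (simp_all add: word_eval_def)

definition fa_eval :: "('k::zero \<Rightarrow> 'a::semiring_1) \<Rightarrow> 'a \<Rightarrow> 'a \<Rightarrow> (gen list \<Rightarrow> 'k) \<Rightarrow> 'a" where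
  "fa_eval \<iota> x y f = (\<Sum>w | f w \<noteq> 0. \<iota> (f w) * word_eval x y w)"

lemma fa_eval_zero [simp]: "fa_eval \<iota> x y (\<lambda>w. 0) = 0"
  by (simp add: fa_eval_def)

definition du_rep :: "('k \<Rightarrow> 'a::ring_1) \<Rightarrow> 'k \<Rightarrow> 'k \<Rightarrow> 'k \<Rightarrow> 'a \<Rightarrow> 'a \<Rightarrow> bool" where
  "du_rep \<iota> \<alpha> \<beta> \<gamma> x y \<longleftrightarrow>
     x * x * y = \<iota> \<alpha> * (x * y * x) + \<iota> \<beta> * (y * x * x) + \<iota> \<gamma> * x \<and>
     x * y * y = \<iota> \<alpha> * (y * x * y) + \<iota> \<beta> * (y * y * x) + \<iota> \<gamma> * y"

locale central_scalars =
  fixes scal :: "'k::field \<Rightarrow> 'a::ring_1"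
  assumes scal_add: "scal (a + b) = scal a + scal b"
    and scal_mult: "scal (a * b) = scal a * scal b"
    and scal_one: "scal 1 = 1"
    and scal_central: "scal c * x = x * scal c"
begin

lemma scal_zero: "scal 0 = 0"
  using scal_add[of 0 0] by simp

lemma scal_uminus: "scal (- a) = - scal a"
  using scal_add[of a "- a"] by (metis add.right_inverse minus_unique scal_zero)

lemma scal_diff: "scal (a - b) = scal a - scal b"
  using scal_add[of a "- b"] by (simp add: scal_uminus)

lemma scal_sum: "scal (sum f A) = (\<Sum>a\<in>A. scal (f a))"
  by (induction A rule: infinite_finite_induct) (simp_all add: scal_zero scal_add)

lemma fa_eval_superset:
  assumes "finite W" "{w. f w \<noteq> 0} \<subseteq> W"
  shows "fa_eval scal x y f = (\<Sum>w\<in>W. scal (f w) * word_eval x y w)"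
  unfolding fa_eval_def by (rule sum.mono_neutral_left) (use assms in \<open>auto simp: scal_zero\<close>)

lemma fa_eval_add:
  assumes "finite {w. f w \<noteq> 0}" "finite {w. g w \<noteq> 0}"
  shows "fa_eval scal x y (\<lambda>w. f w + g w) = fa_eval scal x y f + fa_eval scal x y g"
proof -
  let ?W = "{w. f w \<noteq> 0} \<union> {w. g w \<noteq> 0}"
  have "fa_eval scal x y (\<lambda>w. f w + g w) = (\<Sum>w\<in>?W. scal (f w + g w) * word_eval x y w)"
    by (rule fa_eval_superset) (use assms in auto)
  also have "\<dots> = (\<Sum>w\<in>?W. scal (f w) * word_eval x y w) + (\<Sum>w\<in>?W. scal (g w) * word_eval x y w)"
    by (simp add: scal_add distrib_right sum.distrib)
  also have "\<dots> = fa_eval scal x y f + fa_eval scal x y g"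
    by (subst (1 2) fa_eval_superset[where W="?W"]) (use assms in auto)
  finally show ?thesis .
qed

lemma fa_eval_uminus: "fa_eval scal x y (\<lambda>w. - f w) = - fa_eval scal x y f"
  by (simp add: fa_eval_def scal_uminus sum_negf)

lemma fa_eval_monom: "fa_eval scal x y (fa_monom w c) = scal c * word_eval x y w"
  by (subst fa_eval_superset[where W="{w}"]) (auto simp: fa_monom_def scal_zero)

lemma fa_eval_mult:
  assumes f: "finite {w. f w \<noteq> 0}" and g: "finite {w. g w \<noteq> 0}"
  shows "fa_eval scal x y (fa_mult f g) = fa_eval scal x y f * fa_eval scal x y g"
proof -
  define Sf where "Sf = {w. f w \<noteq> 0}"
  define Sg where "Sg = {w. g w \<noteq> 0}"
  define W where "W = (\<lambda>(a, b). a @ b) ` (Sf \<times> Sg)"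
  define F where "F = (\<lambda>(w, i). scal (f (take i w)) * scal (g (drop i w)) * word_eval x y w)"
  define Z where "Z = {(w, i) \<in> Sigma W (\<lambda>w. {..length w}). take i w \<in> Sf \<and> drop i w \<in> Sg}"
  have fin: "finite W" unfolding W_def Sf_def Sg_def using f g by auto
  have "fa_eval scal x y (fa_mult f g) = (\<Sum>w\<in>W. scal (fa_mult f g w) * word_eval x y w)"
    by (rule fa_eval_superset[OF fin]) (use fa_mult_support in \<open>auto simp: W_def Sf_def Sg_def\<close>)
  also have "\<dots> = (\<Sum>w\<in>W. \<Sum>i\<le>length w. F (w, i))"
    by (simp add: fa_mult_def F_def scal_sum scal_mult sum_distrib_right)
  also have "\<dots> = (\<Sum>p\<in>Sigma W (\<lambda>w. {..length w}). F p)"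
    using sum.Sigma[OF fin, of "\<lambda>w. {..length w}" "\<lambda>w i. F (w, i)"] by simp
  also have "\<dots> = (\<Sum>p\<in>Z. F p)"
    by (rule sum.mono_neutral_right)
      (auto simp: Z_def F_def Sf_def Sg_def scal_zero intro: finite_SigmaI fin)
  also have "\<dots> = (\<Sum>(a, b)\<in>Sf \<times> Sg. scal (f a) * scal (g b) * word_eval x y (a @ b))"
    by (rule sum.reindex_bij_witness[of _ "\<lambda>(a, b). (a @ b, length a)" "\<lambda>(w, i). (take i w, drop i w)"])
      (auto simp: Z_def F_def W_def simp del: word_eval_simps take_append drop_append, simp_all)
  also have "\<dots> = (\<Sum>a\<in>Sf. \<Sum>b\<in>Sg. (scal (f a) * word_eval x y a) * (scal (g b) * word_eval x y b))"
  proof -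
    have "scal c * scal d * (v * v') = (scal c * v) * (scal d * v')" for c d v v'
      by (metis mult.assoc scal_central)
    then show ?thesis
      by (simp add: sum.cartesian_product)
  qed
  also have "\<dots> = fa_eval scal x y f * fa_eval scal x y g"
    by (simp add: fa_eval_def Sf_def Sg_def sum_product)
  finally show ?thesis .
qed

lemma fa_eval_du_rel1:
  "fa_eval scal x y (du_rel1 \<alpha> \<beta> \<gamma>)
     = x * x * y - (scal \<alpha> * (x * y * x) + scal \<beta> * (y * x * x) + scal \<gamma> * x)"
proof -
  have "fa_eval scal x y (du_rel1 \<alpha> \<beta> \<gamma>)
      = (\<Sum>w\<in>{[D,D,U], [D,U,D], [U,D,D], [D]}. scal (du_rel1 \<alpha> \<beta> \<gamma> w) * word_eval x y w)"
    by (rule fa_eval_superset) (auto simp: du_rel1_def fa_monom_def)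
  then show ?thesis
    by (simp add: du_rel1_def fa_monom_def scal_zero scal_one scal_diff scal_uminus mult.assoc)
qed

lemma fa_eval_du_rel2:
  "fa_eval scal x y (du_rel2 \<alpha> \<beta> \<gamma>)
     = x * y * y - (scal \<alpha> * (y * x * y) + scal \<beta> * (y * y * x) + scal \<gamma> * y)"
proof -
  have "fa_eval scal x y (du_rel2 \<alpha> \<beta> \<gamma>)
      = (\<Sum>w\<in>{[D,U,U], [U,D,U], [U,U,D], [U]}. scal (du_rel2 \<alpha> \<beta> \<gamma> w) * word_eval x y w)"
    by (rule fa_eval_superset) (auto simp: du_rel2_def fa_monom_def)
  then show ?thesis
    by (simp add: du_rel2_def fa_monom_def scal_zero scal_one scal_diff scal_uminus mult.assoc)
qed

lemma du_rep_iff_relations_vanish: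
  "du_rep scal \<alpha> \<beta> \<gamma> x y \<longleftrightarrow>
     fa_eval scal x y (du_rel1 \<alpha> \<beta> \<gamma>) = 0 \<and> fa_eval scal x y (du_rel2 \<alpha> \<beta> \<gamma>) = 0"
  by (simp add: du_rep_def fa_eval_du_rel1 fa_eval_du_rel2)

definition fa_eval_kernel :: "'a \<Rightarrow> 'a \<Rightarrow> (gen list \<Rightarrow> 'k) set" where
  "fa_eval_kernel x y = {f \<in> carrier free_alg. fa_eval scal x y f = 0}"

lemma ideal_fa_eval_kernel: "ideal (fa_eval_kernel x y) free_alg"
proof (rule idealI[OF ring_free_alg])
  interpret FA: ring "free_alg :: (gen list \<Rightarrow> 'k) ring" by (rule ring_free_alg)
  have a_inv: "\<ominus>\<^bsub>free_alg\<^esub> f = (\<lambda>w. - f w)" if "f \<in> carrier free_alg" for f :: "gen list \<Rightarrow> 'k"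
    using that by (intro FA.minus_equality) (auto simp: free_alg_simps)
  show "subgroup (fa_eval_kernel x y) (add_monoid free_alg)"
    by (rule FA.add.subgroupI)
      (auto simp: fa_eval_kernel_def free_alg_simps a_inv fa_eval_uminus fa_eval_add
        finite_support_add intro!: exI[of _ "\<lambda>w. 0"])
qed (auto simp: fa_eval_kernel_def free_alg_simps fa_eval_mult finite_support_fa_mult)

lemma du_ideal_subset_kernel:
  "du_rep scal \<alpha> \<beta> \<gamma> x y \<Longrightarrow> du_ideal \<alpha> \<beta> \<gamma> \<subseteq> fa_eval_kernel x y"
  unfolding du_ideal_def
  by (rule ring.genideal_minimal[OF ring_free_alg ideal_fa_eval_kernel])
    (auto simp: fa_eval_kernel_def du_relations_carrier du_rep_iff_relations_vanish)

lemma fa_eval_du_class: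
  assumes rep: "du_rep scal \<alpha> \<beta> \<gamma> x y" and f: "f \<in> carrier free_alg"
  shows "fa_eval scal x y ` du_class \<alpha> \<beta> \<gamma> f = {fa_eval scal x y f}"
proof -
  interpret I: ideal "du_ideal \<alpha> \<beta> \<gamma>" free_alg by (rule ideal_du_ideal)
  have "fa_eval scal x y (i \<oplus>\<^bsub>free_alg\<^esub> f) = fa_eval scal x y f" if "i \<in> du_ideal \<alpha> \<beta> \<gamma>" for i
    using du_ideal_subset_kernel[OF rep] that f
    by (auto simp: fa_eval_kernel_def free_alg_simps fa_eval_add)
  then have "fa_eval scal x y ` du_class \<alpha> \<beta> \<gamma> f \<subseteq> {fa_eval scal x y f}"
    unfolding du_class_def a_r_coset_def' by blast
  moreover have "fa_eval scal x y f \<in> fa_eval scal x y ` du_class \<alpha> \<beta> \<gamma> f"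
    using f unfolding du_class_def by (simp add: I.a_rcos_self)
  ultimately show ?thesis by (metis empty_iff subset_singletonD)
qed

definition du_alg_hom :: "'k \<Rightarrow> 'k \<Rightarrow> 'k \<Rightarrow> ((gen list \<Rightarrow> 'k) set \<Rightarrow> 'a) \<Rightarrow> bool" where
  "du_alg_hom \<alpha> \<beta> \<gamma> \<chi> \<longleftrightarrow>
     (\<forall>X\<in>carrier (down_up \<alpha> \<beta> \<gamma>). \<forall>Y\<in>carrier (down_up \<alpha> \<beta> \<gamma>).
        \<chi> (X \<oplus>\<^bsub>down_up \<alpha> \<beta> \<gamma>\<^esub> Y) = \<chi> X + \<chi> Y \<and>
        \<chi> (X \<otimes>\<^bsub>down_up \<alpha> \<beta> \<gamma>\<^esub> Y) = \<chi> X * \<chi> Y) \<and>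
     (\<forall>c. \<chi> (du_scalar \<alpha> \<beta> \<gamma> c) = scal c)"

lemma du_alg_hom_zero:
  assumes "du_alg_hom \<alpha> \<beta> \<gamma> \<chi>"
  shows "\<chi> \<zero>\<^bsub>down_up \<alpha> \<beta> \<gamma>\<^esub> = 0"
proof -
  interpret A: ring "down_up \<alpha> \<beta> \<gamma>" by (rule ring_down_up)
  have "\<chi> \<zero>\<^bsub>down_up \<alpha> \<beta> \<gamma>\<^esub> = \<chi> \<zero>\<^bsub>down_up \<alpha> \<beta> \<gamma>\<^esub> + \<chi> \<zero>\<^bsub>down_up \<alpha> \<beta> \<gamma>\<^esub>"
    using assms A.zero_closed unfolding du_alg_hom_def by (metis A.l_zero)
  then show ?thesis by simp
qed

lemma du_alg_hom_monom:
  assumes "du_alg_hom \<alpha> \<beta> \<gamma> \<chi>"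
  shows "\<chi> (du_class \<alpha> \<beta> \<gamma> (fa_monom w c))
    = scal c * word_eval (\<chi> (du_d \<alpha> \<beta> \<gamma>)) (\<chi> (du_u \<alpha> \<beta> \<gamma>)) w"
proof (induction w arbitrary: c)
  case Nil
  then show ?case
    using assms by (simp add: du_alg_hom_def du_scalar_eq_class)
next
  case (Cons g w)
  have "fa_monom (g # w) c = fa_monom [g] 1 \<otimes>\<^bsub>free_alg\<^esub> fa_monom w c"
    by (simp add: free_alg_simps fa_monom_mult)
  then have "\<chi> (du_class \<alpha> \<beta> \<gamma> (fa_monom (g # w) c))
      = \<chi> (du_class \<alpha> \<beta> \<gamma> (fa_monom [g] 1)) * \<chi> (du_class \<alpha> \<beta> \<gamma> (fa_monom w c))"
    using assms by (simp add: du_alg_hom_def du_class_mult du_class_carrier fa_monom_carrier)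
  then show ?case
    using Cons by (cases g) (simp_all add: mult.assoc scal_central)
qed

lemma du_alg_hom_class:
  assumes hom: "du_alg_hom \<alpha> \<beta> \<gamma> \<chi>" and f: "f \<in> carrier free_alg"
  shows "\<chi> (du_class \<alpha> \<beta> \<gamma> f) = fa_eval scal (\<chi> (du_d \<alpha> \<beta> \<gamma>)) (\<chi> (du_u \<alpha> \<beta> \<gamma>)) f"
proof -
  let ?x = "\<chi> (du_d \<alpha> \<beta> \<gamma>)" and ?y = "\<chi> (du_u \<alpha> \<beta> \<gamma>)"
  have "\<chi> (du_class \<alpha> \<beta> \<gamma> h) = (\<Sum>w\<in>W. scal (h w) * word_eval ?x ?y w)"
    if "finite W" "{w. h w \<noteq> 0} \<subseteq> W" for W h
    using that
  proof (induction W arbitrary: h rule: finite_induct)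
    case empty
    then have "h = \<zero>\<^bsub>free_alg\<^esub>" by (auto simp: free_alg_simps)
    then show ?case
      using du_alg_hom_zero[OF hom] by (simp add: du_class_zero)
  next
    case (insert w W)
    define h' where "h' = h(w := 0)"
    have h': "h' \<in> carrier free_alg"
      using insert by (auto simp: free_alg_simps h'_def intro: finite_subset)
    have "h = h' \<oplus>\<^bsub>free_alg\<^esub> fa_monom w (h w)"
      by (auto simp: free_alg_simps h'_def fa_monom_def)
    then have "du_class \<alpha> \<beta> \<gamma> h
        = du_class \<alpha> \<beta> \<gamma> h' \<oplus>\<^bsub>down_up \<alpha> \<beta> \<gamma>\<^esub> du_class \<alpha> \<beta> \<gamma> (fa_monom w (h w))"
      using du_class_add[OF h' fa_monom_carrier] by metis
    then have "\<chi> (du_class \<alpha> \<beta> \<gamma> h)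
        = \<chi> (du_class \<alpha> \<beta> \<gamma> h') + \<chi> (du_class \<alpha> \<beta> \<gamma> (fa_monom w (h w)))"
      using hom h' by (simp add: du_alg_hom_def du_class_carrier fa_monom_carrier)
    also have "\<chi> (du_class \<alpha> \<beta> \<gamma> h') = (\<Sum>v\<in>W. scal (h' v) * word_eval ?x ?y v)"
      by (rule insert.IH) (use insert.prems in \<open>auto simp: h'_def\<close>)
    also have "\<dots> = (\<Sum>v\<in>W. scal (h v) * word_eval ?x ?y v)"
      by (rule sum.cong) (use \<open>w \<notin> W\<close> in \<open>auto simp: h'_def\<close>)
    finally show ?case
      using insert.hyps by (simp add: du_alg_hom_monom[OF hom, of w] add.commute)
  qed
  then show ?thesis
    using f by (simp add: free_alg_simps fa_eval_def)
qed

lemma du_alg_hom_du_rep: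
  assumes "du_alg_hom \<alpha> \<beta> \<gamma> \<chi>"
  shows "du_rep scal \<alpha> \<beta> \<gamma> (\<chi> (du_d \<alpha> \<beta> \<gamma>)) (\<chi> (du_u \<alpha> \<beta> \<gamma>))"
proof -
  have "fa_eval scal (\<chi> (du_d \<alpha> \<beta> \<gamma>)) (\<chi> (du_u \<alpha> \<beta> \<gamma>)) r = 0"
    if "r \<in> du_ideal \<alpha> \<beta> \<gamma>" "r \<in> carrier free_alg" for r
    using du_alg_hom_class[OF assms that(2)] du_class_eq_zero[OF that(1)] du_alg_hom_zero[OF assms]
    by simp
  then show ?thesis
    by (simp add: du_rep_iff_relations_vanish du_relations_in_ideal du_relations_carrier)
qed

text \<open>Well defined on classes only when \<open>(x, y)\<close> satisfies the relations (\<open>fa_eval_du_class\<close>).\<close>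

definition rep_map :: "'a \<Rightarrow> 'a \<Rightarrow> (gen list \<Rightarrow> 'k) set \<Rightarrow> 'a" where
  "rep_map x y X = the_elem (fa_eval scal x y ` X)"

lemma rep_map_class:
  "du_rep scal \<alpha> \<beta> \<gamma> x y \<Longrightarrow> f \<in> carrier free_alg \<Longrightarrow>
     rep_map x y (du_class \<alpha> \<beta> \<gamma> f) = fa_eval scal x y f"
  by (simp add: rep_map_def fa_eval_du_class)

lemma du_alg_hom_rep_map:
  assumes rep: "du_rep scal \<alpha> \<beta> \<gamma> x y"
  shows "du_alg_hom \<alpha> \<beta> \<gamma> (rep_map x y)"
proof -
  note rep_map_class[OF rep, simp]
  have "rep_map x y (du_class \<alpha> \<beta> \<gamma> f \<oplus>\<^bsub>down_up \<alpha> \<beta> \<gamma>\<^esub> du_class \<alpha> \<beta> \<gamma> g)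
      = rep_map x y (du_class \<alpha> \<beta> \<gamma> f) + rep_map x y (du_class \<alpha> \<beta> \<gamma> g)"
    "rep_map x y (du_class \<alpha> \<beta> \<gamma> f \<otimes>\<^bsub>down_up \<alpha> \<beta> \<gamma>\<^esub> du_class \<alpha> \<beta> \<gamma> g)
      = rep_map x y (du_class \<alpha> \<beta> \<gamma> f) * rep_map x y (du_class \<alpha> \<beta> \<gamma> g)"
    if "f \<in> carrier free_alg" "g \<in> carrier free_alg" for f g
    using that by (simp_all flip: du_class_add du_class_mult
        add: free_alg_simps fa_eval_add fa_eval_mult finite_support_add finite_support_fa_mult)
  then show ?thesis
    unfolding du_alg_hom_def carrier_down_up
    by (auto simp: du_scalar_eq_class fa_monom_carrier fa_eval_monom scal_one)
qed

lemma du_alg_hom_comp: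
  assumes "\<phi> \<in> ring_hom (down_up \<alpha> \<beta> \<gamma>) (down_up \<alpha>' \<beta>' \<gamma>')"
    and "\<And>c. \<phi> (du_scalar \<alpha> \<beta> \<gamma> c) = du_scalar \<alpha>' \<beta>' \<gamma>' c"
    and "du_alg_hom \<alpha>' \<beta>' \<gamma>' \<chi>"
  shows "du_alg_hom \<alpha> \<beta> \<gamma> (\<chi> \<circ> \<phi>)"
  using assms by (simp add: du_alg_hom_def ring_hom_add ring_hom_mult ring_hom_closed)

lemma du_hom_substitution:
  assumes hom: "\<phi> \<in> ring_hom (down_up \<alpha> \<beta> \<gamma>) (down_up \<alpha>' \<beta>' \<gamma>')"
    and scalar: "\<And>c. \<phi> (du_scalar \<alpha> \<beta> \<gamma> c) = du_scalar \<alpha>' \<beta>' \<gamma>' c"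
    and P: "P \<in> carrier free_alg" "\<phi> (du_d \<alpha> \<beta> \<gamma>) = du_class \<alpha>' \<beta>' \<gamma>' P"
    and Q: "Q \<in> carrier free_alg" "\<phi> (du_u \<alpha> \<beta> \<gamma>) = du_class \<alpha>' \<beta>' \<gamma>' Q"
    and rep: "du_rep scal \<alpha>' \<beta>' \<gamma>' x y"
  shows "du_rep scal \<alpha> \<beta> \<gamma> (fa_eval scal x y P) (fa_eval scal x y Q)"
    and "\<And>f g. f \<in> carrier free_alg \<Longrightarrow> g \<in> carrier free_alg \<Longrightarrow>
           \<phi> (du_class \<alpha> \<beta> \<gamma> f) = du_class \<alpha>' \<beta>' \<gamma>' g \<Longrightarrow>
           fa_eval scal x y g = fa_eval scal (fa_eval scal x y P) (fa_eval scal x y Q) f"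
proof -
  let ?\<chi> = "rep_map x y \<circ> \<phi>"
  have \<chi>: "du_alg_hom \<alpha> \<beta> \<gamma> ?\<chi>"
    by (rule du_alg_hom_comp[OF hom scalar du_alg_hom_rep_map[OF rep]])
  have d: "rep_map x y (\<phi> (du_d \<alpha> \<beta> \<gamma>)) = fa_eval scal x y P"
    and u: "rep_map x y (\<phi> (du_u \<alpha> \<beta> \<gamma>)) = fa_eval scal x y Q"
    using P Q by (simp_all add: rep_map_class[OF rep])
  show "du_rep scal \<alpha> \<beta> \<gamma> (fa_eval scal x y P) (fa_eval scal x y Q)"
    using du_alg_hom_du_rep[OF \<chi>] by (simp add: d u)
  show "fa_eval scal x y g = fa_eval scal (fa_eval scal x y P) (fa_eval scal x y Q) f"
    if "f \<in> carrier free_alg" "g \<in> carrier free_alg" "\<phi> (du_class \<alpha> \<beta> \<gamma> f) = du_class \<alpha>' \<beta>' \<gamma>' g"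
    for f g
    using du_alg_hom_class[OF \<chi> that(1)] that by (simp add: d u rep_map_class[OF rep])
qed

end

section \<open>Upper triangular representations\<close>

text \<open>\<open>Upper2 a s b\<close> is the matrix \<open>[[a, s], [0, b]]\<close>.\<close>

datatype 'a upper2 = Upper2 (diag1: 'a) (corner: 'a) (diag2: 'a)

lemma upper2_eq_iff: "x = y \<longleftrightarrow> diag1 x = diag1 y \<and> corner x = corner y \<and> diag2 x = diag2 y"
  by (cases x; cases y) simp

instantiation upper2 :: (comm_ring_1) ring_1
begin
definition "0 = Upper2 0 0 0"
definition "1 = Upper2 1 0 1"
definition "x + y = Upper2 (diag1 x + diag1 y) (corner x + corner y) (diag2 x + diag2 y)"
definition "x - y = Upper2 (diag1 x - diag1 y) (corner x - corner y) (diag2 x - diag2 y)"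
definition "- x = Upper2 (- diag1 x) (- corner x) (- diag2 x)"
definition "x * y = Upper2 (diag1 x * diag1 y) (diag1 x * corner y + corner x * diag2 y) (diag2 x * diag2 y)"
instance
  by standard (auto simp: upper2_eq_iff zero_upper2_def one_upper2_def plus_upper2_def
      minus_upper2_def uminus_upper2_def times_upper2_def algebra_simps)
end

lemma upper2_simps [simp]:
  "diag1 0 = 0" "corner 0 = 0" "diag2 0 = 0" "diag1 1 = 1" "corner 1 = 0" "diag2 1 = 1"
  "diag1 (x + y) = diag1 x + diag1 y" "corner (x + y) = corner x + corner y"
  "diag2 (x + y) = diag2 x + diag2 y"
  "diag1 (x - y) = diag1 x - diag1 y" "corner (x - y) = corner x - corner y"
  "diag2 (x - y) = diag2 x - diag2 y"
  "diag1 (- x) = - diag1 x" "corner (- x) = - corner x" "diag2 (- x) = - diag2 x"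
  "diag1 (x * y) = diag1 x * diag1 y" "corner (x * y) = diag1 x * corner y + corner x * diag2 y"
  "diag2 (x * y) = diag2 x * diag2 y"
  by (simp_all add: zero_upper2_def one_upper2_def plus_upper2_def minus_upper2_def
      uminus_upper2_def times_upper2_def)

lemma upper2_sum [simp]:
  "diag1 (sum f A) = (\<Sum>a\<in>A. diag1 (f a))" "corner (sum f A) = (\<Sum>a\<in>A. corner (f a))"
  "diag2 (sum f A) = (\<Sum>a\<in>A. diag2 (f a))"
  by (induction A rule: infinite_finite_induct; simp)+

definition upper2_scalar :: "'a::comm_ring_1 \<Rightarrow> 'a upper2" where
  "upper2_scalar c = Upper2 c 0 c"

interpretation upper2: central_scalars "upper2_scalar :: 'k::field \<Rightarrow> 'k upper2"
  by standard (simp_all add: upper2_scalar_def upper2_eq_iff mult.commute)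

abbreviation tri_rep :: "'k::field \<Rightarrow> 'k upper2 \<Rightarrow> 'k upper2 \<Rightarrow> bool" where
  "tri_rep \<alpha> \<equiv> du_rep upper2_scalar \<alpha> 0 0"

abbreviation tri_eval :: "'k::field upper2 \<Rightarrow> 'k upper2 \<Rightarrow> (gen list \<Rightarrow> 'k) \<Rightarrow> 'k upper2" where
  "tri_eval \<equiv> fa_eval upper2_scalar"

text \<open>\<open>P, Q\<close> represent the images of \<open>d, u\<close> under an isomorphism and \<open>R, S\<close> those under its
  inverse (\<open>down_up_iso_subst_retractions\<close>).\<close>

definition subst_retraction ::
    "'k::field \<Rightarrow> 'k \<Rightarrow> (gen list \<Rightarrow> 'k) \<Rightarrow> (gen list \<Rightarrow> 'k) \<Rightarrow> (gen list \<Rightarrow> 'k) \<Rightarrow> (gen list \<Rightarrow> 'k) \<Rightarrow> bool"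
  where
  "subst_retraction \<alpha> \<alpha>' P Q R S \<longleftrightarrow>
     (\<forall>x y. tri_rep \<alpha> x y \<longrightarrow>
        tri_rep \<alpha>' (tri_eval x y P) (tri_eval x y Q) \<and>
        tri_eval (tri_eval x y P) (tri_eval x y Q) R = x \<and>
        tri_eval (tri_eval x y P) (tri_eval x y Q) S = y)"

lemma subst_retraction_of_hom:
  fixes \<alpha> \<alpha>' :: "'k::field"
  assumes hom: "\<phi> \<in> ring_hom (down_up \<alpha> 0 0) (down_up \<alpha>' 0 0)"
    and scalar: "\<And>c. \<phi> (du_scalar \<alpha> 0 0 c) = du_scalar \<alpha>' 0 0 c"
    and P: "P \<in> carrier free_alg" "\<phi> (du_d \<alpha> 0 0) = du_class \<alpha>' 0 0 P"
    and Q: "Q \<in> carrier free_alg" "\<phi> (du_u \<alpha> 0 0) = du_class \<alpha>' 0 0 Q"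
    and R: "R \<in> carrier free_alg" "\<phi> (du_class \<alpha> 0 0 R) = du_d \<alpha>' 0 0"
    and S: "S \<in> carrier free_alg" "\<phi> (du_class \<alpha> 0 0 S) = du_u \<alpha>' 0 0"
  shows "subst_retraction \<alpha>' \<alpha> P Q R S"
  unfolding subst_retraction_def
proof (intro allI impI conjI)
  fix x y :: "'k upper2"
  assume rep: "tri_rep \<alpha>' x y"
  note subst = upper2.du_hom_substitution[OF hom scalar P Q rep]
  show "tri_rep \<alpha> (tri_eval x y P) (tri_eval x y Q)"
    by (rule subst(1))
  show "tri_eval (tri_eval x y P) (tri_eval x y Q) R = x"
    using subst(2)[OF R(1) fa_monom_carrier R(2)] by (simp add: upper2.fa_eval_monom upper2.scal_one)
  show "tri_eval (tri_eval x y P) (tri_eval x y Q) S = y"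
    using subst(2)[OF S(1) fa_monom_carrier S(2)] by (simp add: upper2.fa_eval_monom upper2.scal_one)
qed

lemma down_up_iso_subst_retractions:
  fixes \<alpha> \<alpha>' :: "'k::field"
  assumes "down_up_iso \<alpha> 0 0 \<alpha>' 0 0"
  shows "\<exists>P Q R S. subst_retraction \<alpha>' \<alpha> P Q R S \<and> subst_retraction \<alpha> \<alpha>' R S P Q"
proof -
  obtain \<phi> where iso: "\<phi> \<in> ring_iso (down_up \<alpha> 0 0) (down_up \<alpha>' 0 0)"
    and scalar: "\<And>c. \<phi> (du_scalar \<alpha> 0 0 c) = du_scalar \<alpha>' 0 0 c"
    using assms unfolding down_up_iso_def by blast
  define \<psi> where "\<psi> = inv_into (carrier (down_up \<alpha> 0 0)) \<phi>"
  have hom: "\<phi> \<in> ring_hom (down_up \<alpha> 0 0) (down_up \<alpha>' 0 0)"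
    using iso by (simp add: ring_iso_def)
  have hom': "\<psi> \<in> ring_hom (down_up \<alpha>' 0 0) (down_up \<alpha> 0 0)"
    using ring_iso_set_sym[OF ring_down_up iso] by (simp add: \<psi>_def ring_iso_def)
  have bij: "bij_betw \<phi> (carrier (down_up \<alpha> 0 0)) (carrier (down_up \<alpha>' 0 0))"
    using iso by (simp add: ring_iso_def)
  have \<psi>\<phi>: "\<psi> (\<phi> X) = X" if "X \<in> carrier (down_up \<alpha> 0 0)" for X
    using bij that unfolding \<psi>_def by (simp add: bij_betw_def inv_into_f_f)
  have \<phi>\<psi>: "\<phi> (\<psi> Y) = Y" if "Y \<in> carrier (down_up \<alpha>' 0 0)" for Y
    using bij that unfolding \<psi>_def by (simp add: bij_betw_def f_inv_into_f)
  have scalar': "\<psi> (du_scalar \<alpha>' 0 0 c) = du_scalar \<alpha> 0 0 c" for c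
    using \<psi>\<phi>[of "du_scalar \<alpha> 0 0 c"] scalar[of c]
    by (simp add: du_scalar_eq_class du_class_carrier fa_monom_carrier)
  have gens: "du_d \<beta> 0 0 \<in> carrier (down_up \<beta> 0 0)" "du_u \<beta> 0 0 \<in> carrier (down_up \<beta> 0 0)"
    for \<beta> :: 'k
    by (simp_all add: du_class_carrier fa_monom_carrier)
  obtain P Q where P: "P \<in> carrier free_alg" "\<phi> (du_d \<alpha> 0 0) = du_class \<alpha>' 0 0 P"
    and Q: "Q \<in> carrier free_alg" "\<phi> (du_u \<alpha> 0 0) = du_class \<alpha>' 0 0 Q"
    using ring_hom_closed[OF hom gens(1)] ring_hom_closed[OF hom gens(2)]
    unfolding carrier_down_up by blast
  obtain R S where R: "R \<in> carrier free_alg" "\<psi> (du_d \<alpha>' 0 0) = du_class \<alpha> 0 0 R"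
    and S: "S \<in> carrier free_alg" "\<psi> (du_u \<alpha>' 0 0) = du_class \<alpha> 0 0 S"
    using ring_hom_closed[OF hom' gens(1)] ring_hom_closed[OF hom' gens(2)]
    unfolding carrier_down_up by blast
  have "subst_retraction \<alpha>' \<alpha> P Q R S"
    by (rule subst_retraction_of_hom[OF hom scalar P Q])
      (use R S \<phi>\<psi>[OF gens(1)] \<phi>\<psi>[OF gens(2)] in auto)
  moreover have "subst_retraction \<alpha> \<alpha>' R S P Q"
    by (rule subst_retraction_of_hom[OF hom' scalar' R S])
      (use P Q \<psi>\<phi>[OF gens(1)] \<psi>\<phi>[OF gens(2)] in auto)
  ultimately show ?thesis by blast
qed

lemma diag_word_eval:
  "diag1 (word_eval x y w) = word_eval (diag1 x) (diag1 y) w"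
  "diag2 (word_eval x y w) = word_eval (diag2 x) (diag2 y) w"
  by (induction w) (simp_all add: word_eval_def split: gen.split)

lemma corner_word_eval:
  "corner (word_eval (Upper2 a s a') (Upper2 b t b') w)
     = s * corner (word_eval (Upper2 a 1 a') (Upper2 b 0 b') w)
       + t * corner (word_eval (Upper2 a 0 a') (Upper2 b 1 b') w)"
proof (induction w)
  case (Cons g w)
  then show ?case
    by (cases g) (simp_all add: diag_word_eval distrib_left mult.left_commute)
qed simp

definition corner_coeff_d :: "'k::field \<Rightarrow> 'k \<Rightarrow> 'k \<Rightarrow> 'k \<Rightarrow> (gen list \<Rightarrow> 'k) \<Rightarrow> 'k" where
  "corner_coeff_d a a' b b' f = corner (tri_eval (Upper2 a 1 a') (Upper2 b 0 b') f)"

definition corner_coeff_u :: "'k::field \<Rightarrow> 'k \<Rightarrow> 'k \<Rightarrow> 'k \<Rightarrow> (gen list \<Rightarrow> 'k) \<Rightarrow> 'k" where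
  "corner_coeff_u a a' b b' f = corner (tri_eval (Upper2 a 0 a') (Upper2 b 1 b') f)"

lemma diag_tri_eval:
  "diag1 (tri_eval x y f) = fa_eval id (diag1 x) (diag1 y) f"
  "diag2 (tri_eval x y f) = fa_eval id (diag2 x) (diag2 y) f"
  by (simp_all add: fa_eval_def upper2_scalar_def diag_word_eval)

lemma corner_tri_eval: "corner (tri_eval x y f) = (\<Sum>w | f w \<noteq> 0. f w * corner (word_eval x y w))"
  by (simp add: fa_eval_def upper2_scalar_def)

lemma tri_eval_Upper2:
  "tri_eval (Upper2 a s a') (Upper2 b t b') f =
     Upper2 (fa_eval id a b f)
       (s * corner_coeff_d a a' b b' f + t * corner_coeff_u a a' b b' f)
       (fa_eval id a' b' f)"
proof -
  have "corner (tri_eval (Upper2 a s a') (Upper2 b t b') f)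
      = s * corner_coeff_d a a' b b' f + t * corner_coeff_u a a' b b' f"
    unfolding corner_coeff_d_def corner_coeff_u_def corner_tri_eval corner_word_eval[of a s a' b t b']
    by (simp add: sum_distrib_left sum.distrib algebra_simps)
  then show ?thesis
    by (simp add: upper2_eq_iff diag_tri_eval)
qed

lemma tri_rep_Upper2_iff:
  "tri_rep \<alpha> (Upper2 a s a') (Upper2 b t b') \<longleftrightarrow>
     a * a * b = \<alpha> * (a * b * a) \<and> a' * a' * b' = \<alpha> * (a' * b' * a') \<and>
     a * a * t + (a * s + s * a') * b' = \<alpha> * (a * b * s + (a * t + s * b') * a') \<and>
     a * b * b = \<alpha> * (b * a * b) \<and> a' * b' * b' = \<alpha> * (b' * a' * b') \<and>
     a * b * t + (a * t + s * b') * b' = \<alpha> * (b * a * t + (b * s + t * a') * b')"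
  by (auto simp: du_rep_def upper2_eq_iff upper2_scalar_def)

lemma left_inverse_imp_right_inverse_2x2:
  fixes a b c d p q r s :: "'k::field"
  assumes "p * a + q * c = 1" "p * b + q * d = 0" "r * a + s * c = 0" "r * b + s * d = 1"
  shows "a * p + b * r = 1" "a * q + b * s = 0" "c * p + d * r = 0" "c * q + d * s = 1"
proof -
  define D where "D = a * d - b * c"
  have "p * D = (p * a + q * c) * d - (p * b + q * d) * c"
    "q * D = (p * b + q * d) * a - (p * a + q * c) * b"
    "r * D = (r * a + s * c) * d - (r * b + s * d) * c"
    "s * D = (r * b + s * d) * a - (r * a + s * c) * b"
    by (simp_all add: D_def algebra_simps)
  then have adj: "p * D = d" "q * D = - b" "r * D = - c" "s * D = a"
    using assms by simp_all
  have "D \<noteq> 0"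
    using adj assms(1) by auto
  moreover have "(a * p + b * r) * D = 1 * D" "(a * q + b * s) * D = 0 * D"
    "(c * p + d * r) * D = 0 * D" "(c * q + d * s) * D = 1 * D"
  proof -
    have "(a * p + b * r) * D = a * (p * D) + b * (r * D)"
      "(a * q + b * s) * D = a * (q * D) + b * (s * D)"
      "(c * p + d * r) * D = c * (p * D) + d * (r * D)"
      "(c * q + d * s) * D = c * (q * D) + d * (s * D)"
      by (simp_all add: algebra_simps)
    then show "(a * p + b * r) * D = 1 * D" "(a * q + b * s) * D = 0 * D"
      "(c * p + d * r) * D = 0 * D" "(c * q + d * s) * D = 1 * D"
      by (simp_all only: adj) (simp_all add: D_def)
  qed
  ultimately show "a * p + b * r = 1" "a * q + b * s = 0" "c * p + d * r = 0" "c * q + d * s = 1"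
    by (metis mult_right_cancel)+
qed

definition all_corners_rep :: "'k::field \<Rightarrow> 'k \<Rightarrow> 'k \<Rightarrow> 'k \<Rightarrow> 'k \<Rightarrow> bool" where
  "all_corners_rep \<alpha> a a' b b' \<longleftrightarrow> (\<forall>s t. tri_rep \<alpha> (Upper2 a s a') (Upper2 b t b'))"

text \<open>The corners transform by the matrix \<open>l\<close>, the substitution \<open>R, S\<close> gives a left inverse \<open>m\<close>,
  which over a field is also a right inverse; so every corner of the image is attained.\<close>

lemma all_corners_rep_transfer:
  assumes E: "subst_retraction \<alpha> \<alpha>' P Q R S" and F: "all_corners_rep \<alpha> a a' b b'"
  shows "all_corners_rep \<alpha>' (fa_eval id a b P) (fa_eval id a' b' P) (fa_eval id a b Q) (fa_eval id a' b' Q)"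
proof -
  define p p' q q' where "p = fa_eval id a b P" "p' = fa_eval id a' b' P"
    "q = fa_eval id a b Q" "q' = fa_eval id a' b' Q"
  define l11 l12 l21 l22 where "l11 = corner_coeff_d a a' b b' P" "l12 = corner_coeff_u a a' b b' P"
    "l21 = corner_coeff_d a a' b b' Q" "l22 = corner_coeff_u a a' b b' Q"
  define m11 m12 m21 m22 where "m11 = corner_coeff_d p p' q q' R" "m12 = corner_coeff_u p p' q q' R"
    "m21 = corner_coeff_d p p' q q' S" "m22 = corner_coeff_u p p' q q' S"
  have step: "tri_rep \<alpha>' (Upper2 p (l11 * s + l12 * t) p') (Upper2 q (l21 * s + l22 * t) q') \<and>
      m11 * (l11 * s + l12 * t) + m12 * (l21 * s + l22 * t) = s \<and>
      m21 * (l11 * s + l12 * t) + m22 * (l21 * s + l22 * t) = t" for s t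
    using E[unfolded subst_retraction_def, rule_format, OF F[unfolded all_corners_rep_def, rule_format]]
    by (simp add: tri_eval_Upper2 p_p'_q_q'_def l11_l12_l21_l22_def m11_m12_m21_m22_def algebra_simps)
  have inverse: "l11 * m11 + l12 * m21 = 1" "l11 * m12 + l12 * m22 = 0"
    "l21 * m11 + l22 * m21 = 0" "l21 * m12 + l22 * m22 = 1"
    using left_inverse_imp_right_inverse_2x2[of m11 l11 m12 l21 l12 l22 m21 m22] step[of 1 0] step[of 0 1]
    by simp_all
  have "tri_rep \<alpha>' (Upper2 p u p') (Upper2 q v q')" for u v
  proof -
    have "l11 * (m11 * u + m12 * v) + l12 * (m21 * u + m22 * v)
        = (l11 * m11 + l12 * m21) * u + (l11 * m12 + l12 * m22) * v"
      "l21 * (m11 * u + m12 * v) + l22 * (m21 * u + m22 * v)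
        = (l21 * m11 + l22 * m21) * u + (l21 * m12 + l22 * m22) * v"
      by (simp_all add: algebra_simps)
    then show ?thesis
      using step[of "m11 * u + m12 * v" "m21 * u + m22 * v"] by (simp add: inverse)
  qed
  then show ?thesis
    by (simp add: all_corners_rep_def p_p'_q_q'_def)
qed

section \<open>Distinguishing the parameters\<close>

lemma subst_retraction_diagonal:
  assumes E: "subst_retraction \<alpha> \<alpha>' P Q R S"
    and rep: "tri_rep \<alpha> (Upper2 a 0 a') (Upper2 b 0 b')"
  shows "fa_eval id (fa_eval id a b P) (fa_eval id a b Q) R = a"
    "fa_eval id (fa_eval id a b P) (fa_eval id a b Q) S = b"
    "tri_rep \<alpha>' (Upper2 (fa_eval id a b P) 0 (fa_eval id a' b' P))
       (Upper2 (fa_eval id a b Q) 0 (fa_eval id a' b' Q))"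
  using E[unfolded subst_retraction_def, rule_format, OF rep]
  by (simp_all add: tri_eval_Upper2)

lemma subst_retraction_from_one:
  fixes \<alpha> :: "'k::field"
  assumes E: "subst_retraction 1 \<alpha> R S P Q" and E': "subst_retraction \<alpha> 1 P Q R S"
  shows "\<alpha> = 1"
proof -
  have "tri_rep \<alpha> (Upper2 1 0 1) (Upper2 0 0 0)"
    by (simp add: tri_rep_Upper2_iff)
  note diag = subst_retraction_diagonal[OF E' this]
  define p q where "p = fa_eval id 1 0 P" "q = fa_eval id 1 0 Q"
  have "all_corners_rep 1 p p q q"
    using diag(3) by (simp add: all_corners_rep_def tri_rep_Upper2_iff p_q_def algebra_simps)
  from all_corners_rep_transfer[OF E this] diag(1,2)
  have "all_corners_rep \<alpha> 1 1 0 0"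
    by (simp add: p_q_def)
  then have "tri_rep \<alpha> (Upper2 1 0 1) (Upper2 0 1 0)"
    by (simp add: all_corners_rep_def)
  then show ?thesis
    by (simp add: tri_rep_Upper2_iff)
qed

lemma subst_retraction_origin:
  fixes \<alpha> \<alpha>' :: "'k::field"
  assumes E: "subst_retraction \<alpha> \<alpha>' P Q R S" and "\<alpha>' \<noteq> 1"
  shows "fa_eval id 0 0 P = 0" "fa_eval id 0 0 Q = 0"
proof -
  have "all_corners_rep \<alpha> 0 0 0 0"
    by (simp add: all_corners_rep_def tri_rep_Upper2_iff)
  from all_corners_rep_transfer[OF E this]
  have "tri_rep \<alpha>' (Upper2 (fa_eval id 0 0 P) 0 (fa_eval id 0 0 P)) (Upper2 (fa_eval id 0 0 Q) 1 (fa_eval id 0 0 Q))"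
    "tri_rep \<alpha>' (Upper2 (fa_eval id 0 0 P) 1 (fa_eval id 0 0 P)) (Upper2 (fa_eval id 0 0 Q) 0 (fa_eval id 0 0 Q))"
    by (simp_all add: all_corners_rep_def)
  then have "fa_eval id 0 0 P * fa_eval id 0 0 P = \<alpha>' * (fa_eval id 0 0 P * fa_eval id 0 0 P)"
    "fa_eval id 0 0 Q * fa_eval id 0 0 Q = \<alpha>' * (fa_eval id 0 0 Q * fa_eval id 0 0 Q)"
    by (simp_all add: tri_rep_Upper2_iff)
  then have "(1 - \<alpha>') * (fa_eval id 0 0 P * fa_eval id 0 0 P) = 0"
    "(1 - \<alpha>') * (fa_eval id 0 0 Q * fa_eval id 0 0 Q) = 0"
    by (simp_all add: algebra_simps)
  with \<open>\<alpha>' \<noteq> 1\<close> show "fa_eval id 0 0 P = 0" "fa_eval id 0 0 Q = 0"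
    by simp_all
qed

lemma subst_retraction_axis:
  fixes \<alpha> \<alpha>' :: "'k::field"
  assumes E: "subst_retraction \<alpha> \<alpha>' P Q R S" and "\<alpha>' \<noteq> 1"
  shows "fa_eval id a 0 Q = 0" "fa_eval id (fa_eval id a 0 P) 0 R = a"
proof -
  note origin = subst_retraction_origin[OF E \<open>\<alpha>' \<noteq> 1\<close>]
  show Q: "fa_eval id a 0 Q = 0"
  proof (cases "a = 0")
    case False
    have "all_corners_rep \<alpha> 0 a 0 0"
      by (simp add: all_corners_rep_def tri_rep_Upper2_iff)
    from all_corners_rep_transfer[OF E this]
    have "tri_rep \<alpha>' (Upper2 0 1 (fa_eval id a 0 P)) (Upper2 0 0 (fa_eval id a 0 Q))"
      by (simp add: all_corners_rep_def origin)
    then show ?thesis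
      by (simp add: tri_rep_Upper2_iff)
  qed (simp add: origin)
  have "tri_rep \<alpha> (Upper2 a 0 a) (Upper2 0 0 0)"
    by (simp add: tri_rep_Upper2_iff)
  from subst_retraction_diagonal(1)[OF E this] Q
  show "fa_eval id (fa_eval id a 0 P) 0 R = a"
    by simp
qed

lemma subst_retraction_scaling:
  fixes \<alpha> \<alpha>' :: "'k::field"
  assumes E: "subst_retraction \<alpha> \<alpha>' P Q R S" and "\<alpha>' \<noteq> 1" "\<alpha> \<noteq> 0"
  shows "fa_eval id (\<alpha> * a) 0 P = \<alpha>' * fa_eval id a 0 P"
proof (cases "a = 0")
  case True
  then show ?thesis
    using subst_retraction_origin[OF E \<open>\<alpha>' \<noteq> 1\<close>] by simp
next
  case False
  note axis = subst_retraction_axis[OF E \<open>\<alpha>' \<noteq> 1\<close>]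
  have nonzero: "fa_eval id (\<alpha> * a) 0 P \<noteq> 0"
    using axis(2)[of "\<alpha> * a"] axis(2)[of 0] subst_retraction_origin[OF E \<open>\<alpha>' \<noteq> 1\<close>]
      False \<open>\<alpha> \<noteq> 0\<close> by auto
  have "all_corners_rep \<alpha> (\<alpha> * a) a 0 0"
    by (simp add: all_corners_rep_def tri_rep_Upper2_iff algebra_simps)
  from all_corners_rep_transfer[OF E this]
  have "tri_rep \<alpha>' (Upper2 (fa_eval id (\<alpha> * a) 0 P) 0 (fa_eval id a 0 P)) (Upper2 0 1 0)"
    by (simp add: all_corners_rep_def axis(1))
  then have "fa_eval id (\<alpha> * a) 0 P * fa_eval id (\<alpha> * a) 0 P
      = fa_eval id (\<alpha> * a) 0 P * (\<alpha>' * fa_eval id a 0 P)"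
    by (simp add: tri_rep_Upper2_iff algebra_simps)
  with nonzero show ?thesis
    by simp
qed

lemma word_eval_u_zero: "word_eval a 0 w = (if U \<in> set w then 0 else (a::'a::semiring_1) ^ length w)"
  by (induction w) (auto simp: word_eval_def split: gen.split)

definition u_free_poly :: "(gen list \<Rightarrow> 'k::comm_ring_1) \<Rightarrow> 'k poly" where
  "u_free_poly f = (\<Sum>w | f w \<noteq> 0. monom (if U \<in> set w then 0 else f w) (length w))"

lemma poly_u_free_poly: "poly (u_free_poly f) a = fa_eval id a 0 f"
  unfolding u_free_poly_def fa_eval_def
  by (auto simp: poly_sum poly_monom word_eval_u_zero intro!: sum.cong)

lemma poly_inverse_scaling_eq:
  fixes p q :: "'k::{idom, ring_char_0} poly"
  assumes inverse: "\<And>a. poly q (poly p a) = a" and scaling: "\<And>a. poly p (\<beta> * a) = \<gamma> * poly p a"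
  shows "\<beta> = \<gamma>"
proof -
  have "pcompose q p = [:0, 1:]"
    using inverse by (simp add: poly_eq_poly_eq_iff[symmetric] fun_eq_iff poly_pcompose)
  then have "degree p = 1"
    using degree_pcompose[of q p] by simp
  then have "coeff p 1 \<noteq> 0"
    by (metis degree_0 leading_coeff_0_iff zero_neq_one)
  moreover have "pcompose p [:0, \<beta>:] = smult \<gamma> p"
    using scaling by (simp add: poly_eq_poly_eq_iff[symmetric] fun_eq_iff poly_pcompose mult.commute)
  then have "coeff (pcompose p [:0, \<beta>:]) 1 = coeff (smult \<gamma> p) 1"
    by simp
  then have "\<beta> * coeff p 1 = \<gamma> * coeff p 1"
    by (simp add: coeff_pcompose_linear)
  ultimately show ?thesis
    by simp
qed

lemma subst_retraction_eq:
  fixes \<alpha> \<alpha>' :: "'k::field_char_0"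
  assumes E: "subst_retraction \<alpha> \<alpha>' P Q R S" and "\<alpha>' \<noteq> 1" "\<alpha> \<noteq> 0"
  shows "\<alpha> = \<alpha>'"
  using poly_inverse_scaling_eq[of "u_free_poly R" "u_free_poly P" \<alpha> \<alpha>']
    subst_retraction_axis(2)[OF E \<open>\<alpha>' \<noteq> 1\<close>] subst_retraction_scaling[OF assms]
  by (simp add: poly_u_free_poly)

lemma subst_retractions_eq:
  fixes \<alpha> \<alpha>' :: "'k::field_char_0"
  assumes E: "subst_retraction \<alpha>' \<alpha> P Q R S" and E': "subst_retraction \<alpha> \<alpha>' R S P Q"
  shows "\<alpha> = \<alpha>'"
proof (rule ccontr)
  assume ne: "\<alpha> \<noteq> \<alpha>'"
  consider "\<alpha> = 1" | "\<alpha>' = 1" | "\<alpha> \<noteq> 1" "\<alpha>' \<noteq> 1" by blast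
  then show False
  proof cases
    case 1
    then show False using subst_retraction_from_one[of \<alpha>' R S P Q] E E' ne by simp
  next
    case 2
    then show False using subst_retraction_from_one[of \<alpha> P Q R S] E E' ne by simp
  next
    case 3
    then show False
      using subst_retraction_eq[OF E] subst_retraction_eq[OF E'] ne by (cases "\<alpha>' = 0") auto
  qed
qed

theorem proposition1:
  fixes \<alpha> \<alpha>' :: "'k::field_char_0"
  assumes "alg_closed TYPE('k)"
  shows "down_up_iso \<alpha> 0 0 \<alpha>' 0 0 \<longleftrightarrow> \<alpha> = \<alpha>'"
proof
  assume "down_up_iso \<alpha> 0 0 \<alpha>' 0 0"
  then show "\<alpha> = \<alpha>'"
    using down_up_iso_subst_retractions subst_retractions_eq by blast
next
  assume "\<alpha> = \<alpha>'"
  then show "down_up_iso \<alpha> 0 0 \<alpha>' 0 0"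
    unfolding down_up_iso_def by (intro exI[of _ id]) (simp add: ring_iso_set_refl)
qed

end
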